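(* Let $w=\{w_j\}_{j\in\mathbb{Z}}$ be a bounded sequence of non-zero elements of $\mathbb{K}\in\{\mathbb{R},\mathbb{C}\}$. If $\liminf_{n\to\infty}\prod_{j=-n+1}^{0}|w_j|=0$, then there exists a sequence $\{p_n\}$ in $\mathbb{N}$ such that $\lim_{n\to\infty}\prod_{j=-p_n+k+1}^{k}|w_j|=0$ for all $k\in\mathbb{Z}$. *)

theory Defs
  imports "HOL-Analysis.Analysis"
begin

definition cor311_claim :: "'a::real_normed_field itself \<Rightarrow> bool" where
  "cor311_claim _ \<longleftrightarrow>
    (\<forall>w :: int \<Rightarrow> 'a.
       bounded (range w) \<longrightarrow> (\<forall>j. w j \<noteq> 0) \<longrightarrow>
       liminf (\<lambda>n::nat. ereal (\<Prod>j\<in>{-int n + 1..0}. norm (w j))) = 0 \<longrightarrow>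
       (\<exists>p :: nat \<Rightarrow> nat. \<forall>k::int.
          (\<lambda>n. \<Prod>j\<in>{k - int (p n) + 1..k}. norm (w j)) \<longlonglongrightarrow> 0))"

end

theory Submission
  imports Defs
begin

text \<open>Write \<open>f j = |w j|\<close>, bounded by \<open>M\<close>. Because the liminf of the backward products
  \<open>a m = \<Prod>j\<in>{-m+1..0}. f j\<close> vanishes, one can pick \<open>m\<^sub>n\<close> with \<open>M\<^sup>n a m\<^sub>n < 1/(n+1)\<close>, and set
  \<open>p\<^sub>n = m\<^sub>n + n\<close>. For \<open>n \<ge> k\<close> the window \<open>{k-p\<^sub>n+1..k}\<close>, extended by the fixed block
  \<open>{k+1..0}\<close>, contains \<open>{-m\<^sub>n+1..0}\<close> and exceeds it by \<open>n + max 0 (-k)\<close> indices, each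
  contributing a factor at most \<open>M\<close>. Hence the window product is \<open>O(1/(n+1))\<close>.\<close>

lemma liminf_less_imp_less:
  fixes X :: "nat \<Rightarrow> 'a::complete_linorder"
  assumes "liminf X < c"
  shows "\<exists>n. X n < c"
proof (rule ccontr)
  assume "\<nexists>n. X n < c"
  then have "c \<le> liminf X"
    by (intro Liminf_bounded always_eventually) (simp add: not_less)
  with assms show False by simp
qed

lemma prod_le_power_card_diff_mult_prod:
  fixes f :: "'b \<Rightarrow> 'a::linordered_idom"
  assumes "finite B" "A \<subseteq> B"
    and "\<And>x. x \<in> B \<Longrightarrow> 0 \<le> f x" "\<And>x. x \<in> B - A \<Longrightarrow> f x \<le> M"
  shows "prod f B \<le> M ^ card (B - A) * prod f A"
proof -
  have "prod f B = prod f (B - A) * prod f A"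
    by (rule prod.subset_diff[OF assms(2,1)])
  also have "\<dots> \<le> M ^ card (B - A) * prod f A"
  proof (rule mult_right_mono)
    show "prod f (B - A) \<le> M ^ card (B - A)"
      using prod_mono[of "B - A" f "\<lambda>_. M"] assms(3,4) by simp
    show "0 \<le> prod f A"
      using assms(2,3) by (auto intro: prod_nonneg)
  qed
  finally show ?thesis .
qed

lemma prod_window_le:
  fixes f :: "int \<Rightarrow> real"
  assumes nonneg: "\<And>j. 0 \<le> f j" and bound: "\<And>j. f j \<le> M" and "k \<le> int n"
  shows "(\<Prod>j\<in>{k - int (m + n) + 1..k}. f j) * (\<Prod>j\<in>{k + 1..0}. f j)
           \<le> M ^ (n + nat (- k)) * (\<Prod>j\<in>{- int m + 1..0}. f j)"
proof -
  define U where "U = {k - int (m + n) + 1..max k 0}"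
  define I where "I = {- int m + 1..0}"
  have "{k - int (m + n) + 1..k} \<union> {k + 1..0} = U"
    "{k - int (m + n) + 1..k} \<inter> {k + 1..0} = {}"
    by (auto simp: U_def)
  then have "(\<Prod>j\<in>{k - int (m + n) + 1..k}. f j) * (\<Prod>j\<in>{k + 1..0}. f j) = prod f U"
    by (metis finite_atLeastAtMost_int prod.union_disjoint)
  also have "\<dots> \<le> M ^ card (U - I) * prod f I"
    using \<open>k \<le> int n\<close> nonneg bound
    by (intro prod_le_power_card_diff_mult_prod) (auto simp: U_def I_def)
  also have "card (U - I) = n + nat (- k)"
    using \<open>k \<le> int n\<close> by (subst card_Diff_subset) (auto simp: U_def I_def)
  finally show ?thesis by (simp add: I_def)
qed

lemma exists_windows_prod_tendsto_zero:
  fixes f :: "int \<Rightarrow> real"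
  assumes pos: "\<And>j. 0 < f j" and bound: "\<And>j. f j \<le> M"
    and small: "\<And>\<epsilon>. 0 < \<epsilon> \<Longrightarrow> \<exists>m. (\<Prod>j\<in>{- int m + 1..0}. f j) < \<epsilon>"
  shows "\<exists>p :: nat \<Rightarrow> nat. \<forall>k. (\<lambda>n. \<Prod>j\<in>{k - int (p n) + 1..k}. f j) \<longlonglongrightarrow> 0"
proof -
  define a where "a m = (\<Prod>j\<in>{- int m + 1..0}. f j)" for m :: nat
  have "0 < M" using pos bound by (meson less_le_trans)
  then have "\<exists>m. a m < inverse ((real n + 1) * M ^ n)" for n
    unfolding a_def by (intro small) simp
  then obtain m where m: "\<And>n. a (m n) < inverse ((real n + 1) * M ^ n)" by metis
  have "(\<lambda>n. \<Prod>j\<in>{k - int (m n + n) + 1..k}. f j) \<longlonglongrightarrow> 0" for k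
  proof -
    define c where "c = (\<Prod>j\<in>{k + 1..0}. f j)"
    have "0 < c" using pos by (simp add: c_def prod_pos)
    have le: "(\<Prod>j\<in>{k - int (m n + n) + 1..k}. f j) \<le> M ^ nat (- k) * inverse (real n + 1) / c"
      if "k \<le> int n" for n
    proof -
      have "(\<Prod>j\<in>{k - int (m n + n) + 1..k}. f j) * c \<le> M ^ nat (- k) * (M ^ n * a (m n))"
        using prod_window_le[where m = "m n", OF less_imp_le[OF pos] bound that]
        by (simp add: a_def c_def power_add ac_simps)
      also have "\<dots> \<le> M ^ nat (- k) * inverse (real n + 1)"
      proof (rule mult_left_mono)
        have "0 < (real n + 1) * M ^ n" using \<open>0 < M\<close> by simp
        then show "M ^ n * a (m n) \<le> inverse (real n + 1)"
          using m[of n] by (simp add: field_simps)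
      qed (use \<open>0 < M\<close> in simp)
      finally show ?thesis by (simp add: pos_le_divide_eq[OF \<open>0 < c\<close>])
    qed
    show ?thesis
    proof (rule tendsto_sandwich)
      show "\<forall>\<^sub>F n in sequentially. 0 \<le> (\<Prod>j\<in>{k - int (m n + n) + 1..k}. f j)"
        using pos by (simp add: prod_nonneg less_imp_le)
      show "\<forall>\<^sub>F n in sequentially.
              (\<Prod>j\<in>{k - int (m n + n) + 1..k}. f j) \<le> M ^ nat (- k) * inverse (real n + 1) / c"
        using eventually_ge_at_top[of "nat k"] by (rule eventually_mono) (intro le, linarith)
      show "(\<lambda>n. M ^ nat (- k) * inverse (real n + 1) / c) \<longlonglongrightarrow> 0"
        using LIMSEQ_inverse_real_of_nat
        by (intro tendsto_divide_zero tendsto_mult_right_zero) (simp add: add.commute)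
    qed simp
  qed
  then show ?thesis by (intro exI[of _ "\<lambda>n. m n + n"]) simp
qed

lemma cor311_claim_real_normed_field: "cor311_claim TYPE('a::real_normed_field)"
  unfolding cor311_claim_def
proof (intro allI impI)
  fix w :: "int \<Rightarrow> 'a"
  assume "bounded (range w)" and nonzero: "\<forall>j. w j \<noteq> 0"
    and liminf: "liminf (\<lambda>n. ereal (\<Prod>j\<in>{- int n + 1..0}. norm (w j))) = 0"
  obtain M where "\<And>j. norm (w j) \<le> M"
    using \<open>bounded (range w)\<close> by (auto simp: bounded_iff)
  moreover have "\<exists>m. (\<Prod>j\<in>{- int m + 1..0}. norm (w j)) < \<epsilon>" if "0 < \<epsilon>" for \<epsilon>
    using liminf that
      liminf_less_imp_less[of "\<lambda>n. ereal (\<Prod>j\<in>{- int n + 1..0}. norm (w j))" "ereal \<epsilon>"]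
    by simp
  ultimately show "\<exists>p :: nat \<Rightarrow> nat. \<forall>k.
      (\<lambda>n. \<Prod>j\<in>{k - int (p n) + 1..k}. norm (w j)) \<longlonglongrightarrow> 0"
    using nonzero by (intro exists_windows_prod_tendsto_zero) auto
qed

theorem corollary3p11:
  shows "cor311_claim TYPE(real) \<and> cor311_claim TYPE(complex)"
  by (intro conjI cor311_claim_real_normed_field)

end
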